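(* Let $\alpha$ be a rational with $0<\alpha<1$, let $\mathsf{S}_1,\mathsf{S}_2,\ldots$ be positive rationals, and define $\mathsf{srtt}_1=\mathsf{S}_1$ and $\mathsf{srtt}_j=(1-\alpha)\mathsf{srtt}_{j-1}+\alpha\mathsf{S}_j$ for $j>1$. Let $c,r>0$ be rationals, let $i\ge 2$ and $n\ge 0$ be integers, and suppose $\mathsf{S}_i,\mathsf{S}_{i+1},\ldots,\mathsf{S}_{i+n}\in[c-r,c+r]$. Then $L\le \mathsf{srtt}_{i+n}\le H$, where $L=(1-\alpha)^{n+1}\mathsf{srtt}_{i-1}+\bigl(1-(1-\alpha)^{n+1}\bigr)(c-r)$ and $H=(1-\alpha)^{n+1}\mathsf{srtt}_{i-1}+\bigl(1-(1-\alpha)^{n+1}\bigr)(c+r)$.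
   Context: This models the smoothed round-trip-time estimator of the TCP retransmission timeout computation; $\mathsf{S}_j$ are RTT samples. *)

theory Defs
  imports Main "HOL.Rat"
begin

text \<open>Smoothed RTT estimator, indexed from 1: srtt 1 = S 1,
  srtt j = (1 - alpha) * srtt (j-1) + alpha * S j for j > 1.
  The value at index 0 is unused and fixed to 0 by convention.\<close>
fun srtt :: "rat \<Rightarrow> (nat \<Rightarrow> rat) \<Rightarrow> nat \<Rightarrow> rat" where
  "srtt a S 0 = 0"
| "srtt a S (Suc 0) = S (Suc 0)"
| "srtt a S (Suc (Suc k)) = (1 - a) * srtt a S (Suc k) + a * S (Suc (Suc k))"

end

theory Submission
  imports Defs
begin

text \<open>Each step of the estimator is the convex combination \<open>x \<mapsto> (1 - \<alpha>) x + \<alpha> s\<close>, which is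
  monotone in both the previous estimate \<open>x\<close> and the sample \<open>s\<close>. Iterating it \<open>k\<close> times from an
  estimate \<open>x\<^sub>0\<close> with all samples at least \<open>lo\<close> yields at least \<open>(1 - \<alpha>)\<^sup>k x\<^sub>0 + (1 - (1 - \<alpha>)\<^sup>k) lo\<close>;
  the upper bound follows by applying the same estimate to the negated samples.\<close>

lemma srtt_Suc: "1 \<le> k \<Longrightarrow> srtt a S (Suc k) = (1 - a) * srtt a S k + a * S (Suc k)"
  by (cases k) auto

lemma srtt_uminus: "srtt a (\<lambda>m. - S m) k = - srtt a S k"
  by (induction a S k rule: srtt.induct) (simp_all add: algebra_simps)

lemma srtt_lower_bound:
  fixes a lo :: rat
  assumes "0 \<le> a" "a \<le> 1" "1 \<le> j"
    and lo: "\<And>m. j < m \<Longrightarrow> m \<le> j + k \<Longrightarrow> lo \<le> S m"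
  shows "(1 - a) ^ k * srtt a S j + (1 - (1 - a) ^ k) * lo \<le> srtt a S (j + k)"
  using lo
proof (induction k)
  case 0
  show ?case by simp
next
  case (Suc k)
  let ?L = "(1 - a) ^ k * srtt a S j + (1 - (1 - a) ^ k) * lo"
  have "?L \<le> srtt a S (j + k)"
    using Suc by simp
  then have "(1 - a) * ?L \<le> (1 - a) * srtt a S (j + k)"
    using \<open>a \<le> 1\<close> by (simp add: mult_left_mono)
  moreover have "a * lo \<le> a * S (j + Suc k)"
    using Suc.prems \<open>0 \<le> a\<close> by (simp add: mult_left_mono)
  moreover have "srtt a S (j + Suc k) = (1 - a) * srtt a S (j + k) + a * S (j + Suc k)"
    using srtt_Suc[of "j + k"] \<open>1 \<le> j\<close> by simp
  ultimately show ?case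
    by (simp add: algebra_simps)
qed

lemma srtt_upper_bound:
  fixes a hi :: rat
  assumes "0 \<le> a" "a \<le> 1" "1 \<le> j"
    and hi: "\<And>m. j < m \<Longrightarrow> m \<le> j + k \<Longrightarrow> S m \<le> hi"
  shows "srtt a S (j + k) \<le> (1 - a) ^ k * srtt a S j + (1 - (1 - a) ^ k) * hi"
proof -
  have "(1 - a) ^ k * srtt a (\<lambda>m. - S m) j + (1 - (1 - a) ^ k) * - hi
          \<le> srtt a (\<lambda>m. - S m) (j + k)"
    using srtt_lower_bound[of a j k "- hi" "\<lambda>m. - S m"] assms by simp
  then show ?thesis
    by (simp add: srtt_uminus algebra_simps)
qed

theorem theorem2:
  fixes \<alpha> c r :: rat and S :: "nat \<Rightarrow> rat" and i n :: nat
  assumes "0 < \<alpha>" and "\<alpha> < 1"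
    and "\<And>j. j \<ge> 1 \<Longrightarrow> S j > 0"
    and "c > 0" and "r > 0"
    and "i \<ge> 2"
    and "\<And>j. i \<le> j \<Longrightarrow> j \<le> i + n \<Longrightarrow> c - r \<le> S j \<and> S j \<le> c + r"
  shows "(1 - \<alpha>) ^ (n + 1) * srtt \<alpha> S (i - 1) + (1 - (1 - \<alpha>) ^ (n + 1)) * (c - r)
           \<le> srtt \<alpha> S (i + n)
       \<and> srtt \<alpha> S (i + n)
           \<le> (1 - \<alpha>) ^ (n + 1) * srtt \<alpha> S (i - 1) + (1 - (1 - \<alpha>) ^ (n + 1)) * (c + r)"
proof -
  have window: "i - 1 < m \<Longrightarrow> m \<le> i - 1 + (n + 1) \<Longrightarrow> c - r \<le> S m \<and> S m \<le> c + r" for m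
    using assms(6,7) by simp
  have index: "i - 1 + (n + 1) = i + n"
    using assms(6) by simp
  show ?thesis
    using srtt_lower_bound[of \<alpha> "i - 1" "n + 1" "c - r" S]
      srtt_upper_bound[of \<alpha> "i - 1" "n + 1" S "c + r"] window assms(1,2,6)
    unfolding index by auto
qed

end
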